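(* For a positive integer $k$, define $f_k$ on the two-dimensional probability simplex by $f_k(x_1,x_2)=1-(2x_1-1)^{2k}$ (equivalently $1-(x_1-x_2)^{2k}$). Then $f_k\in\mathfrak{F}_{sc}$. Moreover, let $\rho=\frac12(I+\vec n\cdot\vec\sigma)$ be a qubit state with Bloch vector $\vec n=n(\sin\theta\cos\phi,\sin\theta\sin\phi,\cos\theta)$ with $0<n<1$, $0<\theta\le\pi/2$, and let $\mathfrak{D}^{(m_1)}$ and $\mathfrak{D}^{(m_2)}$ be the following pure state decompositions of $\rho$: with $\theta_3=\arccos\sqrt{1-n^2\sin^2\theta}$, $\mathfrak{D}^{(m_1)}$ consists of $\cos\frac{\theta_3}{2}|0\rangle+e^{i\phi}\sin\frac{\theta_3}{2}|1\rangle$ and $\sin\frac{\theta_3}{2}|0\rangle+e^{i\phi}\cos\frac{\theta_3}{2}|1\rangle$ with probabilities $\frac12\big(1\pm\frac{n\cos\theta}{\cos\theta_3}\big)$; with $\theta_4=\arccos\frac{1+2n\cos\theta+n^2\cos2\theta}{1+n^2+2n\cos\theta}$, $\mathfrak{D}^{(m_2)}$ consists of $|1\rangle$ with probability $\frac{1-n^2}{2(1+n\cos\theta)}$ and $\cos\frac{\theta_4}{2}|0\rangle+e^{i\phi}\sin\frac{\theta_4}{2}|1\rangle$ with probability $\frac{1+n^2+2n\cos\theta}{2(1+n\cos\theta)}$. Then there exists $K$ such that for all $k\ge K$, $\bar C_{f_k}(\mathfrak{D}^{(m_1)})>\bar C_{f_k}(\mathfrak{D}^{(m_2)})$. In particular,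 there is no single pure state decomposition of such a $\rho$ that minimizes the average coherence $\bar C_f$ simultaneously for all $f\in\mathfrak{F}_{sc}$ among the decompositions $\mathfrak{D}^{(m_1)},\mathfrak{D}^{(m_2)}$ (i.e. $\mathfrak{D}^{(m_1)}$ is not minimal for every $f$).
   Context: Reference basis $\{|0\rangle,|1\rangle\}$ of $\mathbb{C}^2$; $\vec\sigma$ are the Pauli matrices. Let $\Omega$ be the probability simplex in $\mathbb{R}^2$. $\mathfrak{F}_{sc}$ denotes the set of functions $f:\Omega\to\mathbb{R}$ such that (i) $f((1,0))=0$; (ii) $f(x_1,x_2)=f(x_2,x_1)$; (iii) $f$ is concave. For a unit vector $|\psi\rangle=\psi_0|0\rangle+\psi_1|1\rangle$, $C_f(|\psi\rangle)=f(|\psi_0|^2,|\psi_1|^2)$. A pure state decomposition of $\rho$ is a finite family $\{p_k,|\psi_k\rangle\}$ with $p_k\ge0$, $\sum_kp_k=1$, unit vectors $|\psi_k\rangle$ and $\rho=\sum_kp_k|\psi_k\rangle\langle\psi_k|$; its average coherence is $\bar C_f(\mathfrak{D})=\sum_kp_kC_f(|\psi_k\rangle)$. *)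

theory Defs
  imports "HOL-Analysis.Analysis"
begin

(* Qubit conventions: a ket is a vector in complex^2, component 1 = amplitude of |0>,
   component 2 = amplitude of |1>.  Operators are complex^2^2 (rows/columns indexed 1,2). *)

type_synonym ket = "complex ^ 2"
type_synonym op2 = "complex ^ 2 ^ 2"

definition ket2 :: "complex \<Rightarrow> complex \<Rightarrow> ket" where
  "ket2 a b = (\<chi> i. if i = 1 then a else b)"

definition mat2 :: "complex \<Rightarrow> complex \<Rightarrow> complex \<Rightarrow> complex \<Rightarrow> op2" where
  "mat2 a b c d = (\<chi> i j. if i = 1 then (if j = 1 then a else b) else (if j = 1 then c else d))"

definition id2 :: op2 where "id2 = mat2 1 0 0 1"
definition sigma_x :: op2 where "sigma_x = mat2 0 1 1 0"
definition sigma_y :: op2 where "sigma_y = mat2 0 (- \<i>) \<i> 0"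
definition sigma_z :: op2 where "sigma_z = mat2 1 0 0 (-1)"

definition bloch_state :: "real \<Rightarrow> real \<Rightarrow> real \<Rightarrow> op2" where
  "bloch_state nx ny nz =
     (\<chi> i j. (1/2) * (id2 $ i $ j + of_real nx * sigma_x $ i $ j
                         + of_real ny * sigma_y $ i $ j + of_real nz * sigma_z $ i $ j))"

definition outer :: "ket \<Rightarrow> op2" where
  "outer \<psi> = (\<chi> i j. \<psi> $ i * cnj (\<psi> $ j))"

definition simplex2 :: "(real \<times> real) set" where
  "simplex2 = {(x1, x2). x1 \<ge> 0 \<and> x2 \<ge> 0 \<and> x1 + x2 = 1}"

definition F_sc :: "(real \<times> real \<Rightarrow> real) set" where
  "F_sc = {f. f (1, 0) = 0 \<and> (\<forall>x1 x2. (x1, x2) \<in> simplex2 \<longrightarrow> f (x1, x2) = f (x2, x1))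
              \<and> concave_on simplex2 f}"

definition coh :: "(real \<times> real \<Rightarrow> real) \<Rightarrow> ket \<Rightarrow> real" where
  "coh f \<psi> = f ((cmod (\<psi> $ 1))\<^sup>2, (cmod (\<psi> $ 2))\<^sup>2)"

definition pure_decomp :: "op2 \<Rightarrow> (real \<times> ket) list \<Rightarrow> bool" where
  "pure_decomp \<rho> D \<longleftrightarrow>
     (\<forall>(p, \<psi>) \<in> set D. p \<ge> 0 \<and> norm \<psi> = 1) \<and>
     sum_list (map fst D) = 1 \<and>
     \<rho> = sum_list (map (\<lambda>(p, \<psi>). p *\<^sub>R outer \<psi>) D)"

definition avg_coh :: "(real \<times> real \<Rightarrow> real) \<Rightarrow> (real \<times> ket) list \<Rightarrow> real" where
  "avg_coh f D = sum_list (map (\<lambda>(p, \<psi>). p * coh f \<psi>) D)"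

definition f_pow :: "nat \<Rightarrow> real \<times> real \<Rightarrow> real" where
  "f_pow k = (\<lambda>(x1, x2). 1 - (2 * x1 - 1) ^ (2 * k))"

end

theory Submission
  imports Defs
begin

text \<open>
  Everything is computed through Bloch vectors. The projector onto
  cos(t/2)|0> + e^(i phi) sin(t/2)|1> is the Bloch state of the unit vector
  (sin t cos phi, sin t sin phi, cos t), mixing Bloch states averages their vectors, and
  f_k takes the value 1 - z^(2k) on a pure state with Bloch z-coordinate z. Both states of
  D(m1) have z-coordinate +-cos theta3, so their average coherence is
  1 - (1 - n^2 sin^2 theta)^k, which tends to 1. D(m2) gives the fixed weight
  (1 - n^2) / (2 (1 + n cos theta)) > 0 to the incoherent state |1>, so its average coherence
  stays below 1 minus that weight; for large k, D(m1) therefore has the larger average coherence.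
\<close>

abbreviation phase_ket :: "real \<Rightarrow> real \<Rightarrow> real \<Rightarrow> ket" where
  "phase_ket \<phi> C S \<equiv> ket2 (of_real C) (exp (\<i> * of_real \<phi>) * of_real S)"

lemma mat2_eq_iff: "mat2 a b c d = mat2 a' b' c' d' \<longleftrightarrow> a = a' \<and> b = b' \<and> c = c' \<and> d = d'"
  by (auto simp: mat2_def vec_eq_iff forall_2)

lemma bloch_state_mat2:
  "bloch_state x y z = mat2 (of_real ((1 + z) / 2)) ((of_real x - \<i> * of_real y) / 2)
                            ((of_real x + \<i> * of_real y) / 2) (of_real ((1 - z) / 2))"
  by (auto simp: bloch_state_def mat2_def vec_eq_iff forall_2 id2_def sigma_x_def sigma_y_def
      sigma_z_def complex_eq_iff)

lemma outer_ket2: "outer (ket2 a b) = mat2 (a * cnj a) (a * cnj b) (b * cnj a) (b * cnj b)"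
  by (auto simp: mat2_def outer_def ket2_def vec_eq_iff forall_2)

lemma norm_ket2: "norm (ket2 a b) = sqrt ((cmod a)\<^sup>2 + (cmod b)\<^sup>2)"
  by (simp add: norm_vec_def L2_set_def sum_2 ket2_def)

lemma norm_phase_ket: "C\<^sup>2 + S\<^sup>2 = 1 \<Longrightarrow> norm (phase_ket \<phi> C S) = 1"
  by (simp add: norm_ket2 norm_mult)

lemma outer_phase_ket:
  assumes "C\<^sup>2 + S\<^sup>2 = 1"
  shows "outer (phase_ket \<phi> C S) = bloch_state (2 * C * S * cos \<phi>) (2 * C * S * sin \<phi>) (C\<^sup>2 - S\<^sup>2)"
proof -
  define e where "e = exp (\<i> * of_real \<phi>)"
  have "e * cnj e = 1"
    by (simp add: e_def exp_cnj flip: exp_add)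
  then have "outer (phase_ket \<phi> C S)
      = mat2 (of_real (C\<^sup>2)) (of_real (C * S) * cnj e) (of_real (C * S) * e) (of_real (S\<^sup>2))"
    by (simp add: e_def outer_ket2 power2_eq_square mult_ac)
  moreover have "(1 + (C\<^sup>2 - S\<^sup>2)) / 2 = C\<^sup>2" "(1 - (C\<^sup>2 - S\<^sup>2)) / 2 = S\<^sup>2"
    using assms by simp_all
  ultimately show ?thesis
    by (simp add: e_def bloch_state_mat2 mat2_eq_iff complex_eq_iff flip: cis_conv_exp)
qed

lemma outer_ket_one: "outer (ket2 0 1) = bloch_state 0 0 (- 1)"
  by (simp add: outer_ket2 bloch_state_mat2)

lemma scaleR_bloch_state_add:
  assumes "p + q = 1"
  shows "p *\<^sub>R bloch_state x y z + q *\<^sub>R bloch_state x' y' z'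
       = bloch_state (p * x + q * x') (p * y + q * y') (p * z + q * z')"
proof -
  have "q = 1 - p" using assms by simp
  then show ?thesis
    by (auto simp: bloch_state_def vec_eq_iff forall_2 id2_def sigma_x_def sigma_y_def sigma_z_def
        mat2_def complex_eq_iff algebra_simps)
qed

lemma pure_decomp_pair:
  assumes "0 \<le> p" "0 \<le> q" "p + q = 1" "norm \<psi>1 = 1" "norm \<psi>2 = 1"
    and "outer \<psi>1 = bloch_state x y z" "outer \<psi>2 = bloch_state x' y' z'"
  shows "pure_decomp (bloch_state (p * x + q * x') (p * y + q * y') (p * z + q * z')) [(p, \<psi>1), (q, \<psi>2)]"
  using assms by (simp add: pure_decomp_def scaleR_bloch_state_add)

lemma coh_bloch:
  assumes "outer \<psi> = bloch_state x y z"
  shows "coh f \<psi> = f ((1 + z) / 2, (1 - z) / 2)"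
proof -
  have "of_real ((cmod (\<psi> $ i))\<^sup>2) = outer \<psi> $ i $ i" for i
    by (simp only: outer_def vec_lambda_beta complex_norm_square)
  from this[of 1] this[of 2]
  have "complex_of_real ((cmod (\<psi> $ 1))\<^sup>2) = of_real ((1 + z) / 2)"
    "complex_of_real ((cmod (\<psi> $ 2))\<^sup>2) = of_real ((1 - z) / 2)"
    by (simp_all add: assms bloch_state_mat2 mat2_def)
  then have "(cmod (\<psi> $ 1))\<^sup>2 = (1 + z) / 2" "(cmod (\<psi> $ 2))\<^sup>2 = (1 - z) / 2"
    by (simp_all only: of_real_eq_iff)
  then show ?thesis
    by (simp only: coh_def)
qed

lemma coh_f_pow_bloch:
  assumes "outer \<psi> = bloch_state x y z"
  shows "coh (f_pow k) \<psi> = 1 - z ^ (2 * k)"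
proof -
  have "2 * ((1 + z) / 2) - 1 = z"
    by (simp add: field_simps)
  then show ?thesis
    by (simp only: coh_bloch[OF assms] f_pow_def case_prod_conv)
qed

lemma convex_simplex2: "convex simplex2"
proof (rule convexI)
  fix x y :: "real \<times> real" and u v :: real
  assume "x \<in> simplex2" "y \<in> simplex2" "0 \<le> u" "0 \<le> v" "u + v = 1"
  moreover have "u * fst x + v * fst y + (u * snd x + v * snd y) = u * (fst x + snd x) + v * (fst y + snd y)"
    by (simp add: algebra_simps)
  ultimately show "u *\<^sub>R x + v *\<^sub>R y \<in> simplex2"
    by (auto simp: simplex2_def)
qed

lemma f_pow_in_F_sc: "f_pow k \<in> F_sc"
proof -
  have convex_pow: "convex_on UNIV (\<lambda>t::real. t ^ (2 * k))"
    by (rule convex_power_even) simp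
  have "concave_on simplex2 (f_pow k)"
    unfolding concave_on_iff
  proof (intro conjI convex_simplex2 ballI allI impI)
    fix x y :: "real \<times> real" and u v :: real
    assume uv: "0 \<le> u" "0 \<le> v" "u + v = 1"
    obtain a1 a2 b1 b2 where xy: "x = (a1, a2)" "y = (b1, b2)"
      by (cases x, cases y)
    have "u * (2 * a1 - 1) + v * (2 * b1 - 1) = 2 * (u * a1 + v * b1) - 1"
      using uv(3) by (simp add: algebra_simps)
    moreover have "(u * (2 * a1 - 1) + v * (2 * b1 - 1)) ^ (2 * k)
        \<le> u * (2 * a1 - 1) ^ (2 * k) + v * (2 * b1 - 1) ^ (2 * k)"
      using convex_onD[OF convex_pow, of v "2 * a1 - 1" "2 * b1 - 1"] uv
      by (simp add: eq_diff_eq[symmetric])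
    ultimately show "u * f_pow k x + v * f_pow k y \<le> f_pow k (u *\<^sub>R x + v *\<^sub>R y)"
      using uv(3) by (simp add: xy f_pow_def algebra_simps)
  qed
  moreover have "f_pow k (x2, x1) = f_pow k (x1, x2)" if "(x1, x2) \<in> simplex2" for x1 x2
  proof -
    have "2 * x2 - 1 = - (2 * x1 - 1)"
      using that by (simp add: simplex2_def)
    then show ?thesis
      by (simp add: f_pow_def power_mult power2_commute)
  qed
  ultimately show ?thesis
    by (auto simp: F_sc_def f_pow_def)
qed

lemma outer_phase_ket_half_angle:
  "outer (phase_ket \<phi> (cos (t / 2)) (sin (t / 2))) = bloch_state (sin t * cos \<phi>) (sin t * sin \<phi>) (cos t)"
  using outer_phase_ket[of "cos (t / 2)" "sin (t / 2)" \<phi>] sin_double[of "t / 2"] cos_double[of "t / 2"]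
  by (simp add: mult_ac)

lemma outer_phase_ket_half_angle_swap:
  "outer (phase_ket \<phi> (sin (t / 2)) (cos (t / 2))) = bloch_state (sin t * cos \<phi>) (sin t * sin \<phi>) (- cos t)"
  using outer_phase_ket[of "sin (t / 2)" "cos (t / 2)" \<phi>] sin_double[of "t / 2"] cos_double[of "t / 2"]
  by (simp add: mult_ac)

lemma pure_decomp_reflected_pair:
  assumes "\<bar>z\<bar> \<le> cos t"
  shows "pure_decomp (bloch_state (sin t * cos \<phi>) (sin t * sin \<phi>) z)
    [((1 + z / cos t) / 2, phase_ket \<phi> (cos (t / 2)) (sin (t / 2))),
     ((1 - z / cos t) / 2, phase_ket \<phi> (sin (t / 2)) (cos (t / 2)))]"
proof -
  define p q where "p = (1 + z / cos t) / 2" and "q = (1 - z / cos t) / 2"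
  have "\<bar>z / cos t\<bar> \<le> 1"
    using assms by (cases "cos t = 0") (auto simp: abs_divide divide_le_eq)
  then have "0 \<le> p" "0 \<le> q"
    unfolding p_def q_def abs_le_iff by auto
  moreover have "p + q = 1"
    by (simp add: p_def q_def field_simps)
  ultimately have "pure_decomp
      (bloch_state (p * (sin t * cos \<phi>) + q * (sin t * cos \<phi>)) (p * (sin t * sin \<phi>) + q * (sin t * sin \<phi>))
         (p * cos t + q * (- cos t)))
      [(p, phase_ket \<phi> (cos (t / 2)) (sin (t / 2))), (q, phase_ket \<phi> (sin (t / 2)) (cos (t / 2)))]"
    by (intro pure_decomp_pair norm_phase_ket outer_phase_ket_half_angle outer_phase_ket_half_angle_swap) simp_all
  moreover have "p * a + q * a = a" for a
    using \<open>p + q = 1\<close> by (metis distrib_right mult_1)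
  moreover have "p * cos t + q * (- cos t) = z"
    using assms by (auto simp: p_def q_def field_simps)
  ultimately show ?thesis
    by (simp only: p_def q_def)
qed

lemma avg_coh_reflected_pair:
  "avg_coh (f_pow k)
    [((1 + w) / 2, phase_ket \<phi> (cos (t / 2)) (sin (t / 2))),
     ((1 - w) / 2, phase_ket \<phi> (sin (t / 2)) (cos (t / 2)))] = 1 - cos t ^ (2 * k)"
  by (simp add: avg_coh_def coh_f_pow_bloch[OF outer_phase_ket_half_angle]
      coh_f_pow_bloch[OF outer_phase_ket_half_angle_swap] field_simps)

lemma pure_decomp_ket_one_pair:
  assumes "0 \<le> p" "0 \<le> q" "p + q = 1"
  shows "pure_decomp (bloch_state (q * sin t * cos \<phi>) (q * sin t * sin \<phi>) (q * cos t - p))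
    [(p, ket2 0 1), (q, phase_ket \<phi> (cos (t / 2)) (sin (t / 2)))]"
proof -
  have "norm (ket2 0 1) = 1"
    by (simp add: norm_ket2)
  from pure_decomp_pair[OF assms this norm_phase_ket outer_ket_one outer_phase_ket_half_angle]
  show ?thesis
    by (simp add: mult.assoc)
qed

lemma avg_coh_ket_one_pair:
  "avg_coh (f_pow k) [(p, ket2 0 1), (q, phase_ket \<phi> (cos (t / 2)) (sin (t / 2)))] = q * (1 - cos t ^ (2 * k))"
  by (simp add: avg_coh_def coh_f_pow_bloch[OF outer_ket_one]
      coh_f_pow_bloch[OF outer_phase_ket_half_angle])

lemma cos_sin_arccos:
  fixes a b :: real
  assumes "a\<^sup>2 + b\<^sup>2 = 1" "0 \<le> b"
  shows "cos (arccos a) = a" "sin (arccos a) = b"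
proof -
  have "a\<^sup>2 \<le> 1"
    using assms(1) zero_le_power2[of b] by linarith
  then have "\<bar>a\<bar> \<le> 1"
    by (simp add: abs_square_le_1)
  then show "cos (arccos a) = a"
    by (simp add: cos_arccos_abs)
  have "sin (arccos a) = sqrt (1 - a\<^sup>2)"
    using \<open>\<bar>a\<bar> \<le> 1\<close> by (intro sin_arccos) auto
  then show "sin (arccos a) = b"
    using assms by (simp add: eq_diff_eq[symmetric])
qed

lemma decomposition_m1:
  fixes n \<theta> \<phi> :: real
  assumes "0 \<le> n" "n \<le> 1" "0 \<le> sin \<theta>"
  defines "\<theta>3 \<equiv> arccos (sqrt (1 - n\<^sup>2 * (sin \<theta>)\<^sup>2))"
  defines "D1 \<equiv>
     [((1 + n * cos \<theta> / cos \<theta>3) / 2, phase_ket \<phi> (cos (\<theta>3 / 2)) (sin (\<theta>3 / 2))),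
      ((1 - n * cos \<theta> / cos \<theta>3) / 2, phase_ket \<phi> (sin (\<theta>3 / 2)) (cos (\<theta>3 / 2)))]"
  shows "pure_decomp (bloch_state (n * sin \<theta> * cos \<phi>) (n * sin \<theta> * sin \<phi>) (n * cos \<theta>)) D1"
    and "avg_coh (f_pow k) D1 = 1 - (1 - n\<^sup>2 * (sin \<theta>)\<^sup>2) ^ k"
proof -
  have "(n * sin \<theta>)\<^sup>2 \<le> 1"
    using assms(1-3) by (simp add: abs_square_le_1 abs_mult mult_le_one)
  then have "(sqrt (1 - n\<^sup>2 * (sin \<theta>)\<^sup>2))\<^sup>2 + (n * sin \<theta>)\<^sup>2 = 1"
    by (simp add: power_mult_distrib)
  moreover have "0 \<le> n * sin \<theta>"
    using assms(1,3) by simp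
  ultimately have cos3: "cos \<theta>3 = sqrt (1 - n\<^sup>2 * (sin \<theta>)\<^sup>2)" and sin3: "sin \<theta>3 = n * sin \<theta>"
    unfolding \<theta>3_def by (rule cos_sin_arccos)+
  have "(n * cos \<theta>)\<^sup>2 \<le> 1 - n\<^sup>2 * (sin \<theta>)\<^sup>2"
  proof -
    have "n\<^sup>2 * (cos \<theta>)\<^sup>2 + n\<^sup>2 * (sin \<theta>)\<^sup>2 = n\<^sup>2"
      by (simp flip: distrib_left)
    moreover have "n\<^sup>2 \<le> 1"
      using assms(1,2) by (simp add: power_le_one)
    ultimately show ?thesis
      by (simp add: power_mult_distrib)
  qed
  then have "\<bar>n * cos \<theta>\<bar> \<le> cos \<theta>3"
    unfolding cos3 by (intro real_le_rsqrt) simp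
  show "pure_decomp (bloch_state (n * sin \<theta> * cos \<phi>) (n * sin \<theta> * sin \<phi>) (n * cos \<theta>)) D1"
    using pure_decomp_reflected_pair[OF \<open>\<bar>n * cos \<theta>\<bar> \<le> cos \<theta>3\<close>, of \<phi>]
    unfolding D1_def sin3 by simp
  show "avg_coh (f_pow k) D1 = 1 - (1 - n\<^sup>2 * (sin \<theta>)\<^sup>2) ^ k"
    using \<open>(n * sin \<theta>)\<^sup>2 \<le> 1\<close>
    by (simp add: D1_def avg_coh_reflected_pair cos3 power_mult power_mult_distrib)
qed

lemma one_plus_mult_cos_pos:
  fixes n t :: real
  assumes "0 \<le> n" "n < 1"
  shows "0 < 1 + n * cos t"
proof -
  have "n * (- 1) \<le> n * cos t"
    using assms(1) by (intro mult_left_mono) simp_all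
  then show ?thesis
    using assms(2) by simp
qed

lemma cos_sin_theta4:
  fixes n \<theta> :: real
  assumes "0 \<le> n" "n < 1" "0 \<le> sin \<theta>"
  defines "d \<equiv> 1 + n\<^sup>2 + 2 * n * cos \<theta>" and "N \<equiv> 1 + 2 * n * cos \<theta> + n\<^sup>2 * cos (2 * \<theta>)"
  shows "0 < d" "cos (arccos (N / d)) = N / d"
    and "sin (arccos (N / d)) = 2 * n * sin \<theta> * (1 + n * cos \<theta>) / d"
proof -
  have pos: "0 < 1 + n * cos \<theta>"
    using assms(1,2) by (rule one_plus_mult_cos_pos)
  have diff: "d - N = 2 * n\<^sup>2 * (sin \<theta>)\<^sup>2"
    unfolding d_def N_def cos_double_sin by (simp add: algebra_simps)
  have sum: "d + N = 2 * (1 + n * cos \<theta>)\<^sup>2"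
    unfolding d_def N_def cos_double_cos by (simp add: power2_eq_square algebra_simps)
  show "0 < d"
    using diff sum pos by (smt (verit) zero_le_power2 zero_less_power2 mult_nonneg_nonneg)
  have "d\<^sup>2 - N\<^sup>2 = (d - N) * (d + N)"
    by (simp add: power2_eq_square algebra_simps)
  also have "\<dots> = (2 * n * sin \<theta> * (1 + n * cos \<theta>))\<^sup>2"
    unfolding diff sum by (simp add: power2_eq_square)
  finally have "(N\<^sup>2 + (2 * n * sin \<theta> * (1 + n * cos \<theta>))\<^sup>2) / d\<^sup>2 = 1"
    using \<open>0 < d\<close> by simp
  then have "(N / d)\<^sup>2 + (2 * n * sin \<theta> * (1 + n * cos \<theta>) / d)\<^sup>2 = 1"
    by (simp only: power_divide add_divide_distrib)
  moreover have "0 \<le> 2 * n * sin \<theta> * (1 + n * cos \<theta>) / d"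
    using assms(1,3) pos \<open>0 < d\<close> by simp
  ultimately show "cos (arccos (N / d)) = N / d"
    and "sin (arccos (N / d)) = 2 * n * sin \<theta> * (1 + n * cos \<theta>) / d"
    by (rule cos_sin_arccos)+
qed

lemma decomposition_m2:
  fixes n \<theta> \<phi> :: real
  assumes "0 \<le> n" "n < 1" "0 \<le> sin \<theta>"
  defines "\<theta>4 \<equiv> arccos ((1 + 2 * n * cos \<theta> + n\<^sup>2 * cos (2 * \<theta>)) / (1 + n\<^sup>2 + 2 * n * cos \<theta>))"
  defines "q \<equiv> (1 + n\<^sup>2 + 2 * n * cos \<theta>) / (2 * (1 + n * cos \<theta>))"
  defines "D2 \<equiv> [((1 - n\<^sup>2) / (2 * (1 + n * cos \<theta>)), ket2 0 1), (q, phase_ket \<phi> (cos (\<theta>4 / 2)) (sin (\<theta>4 / 2)))]"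
  shows "pure_decomp (bloch_state (n * sin \<theta> * cos \<phi>) (n * sin \<theta> * sin \<phi>) (n * cos \<theta>)) D2"
    and "avg_coh (f_pow k) D2 \<le> q" and "q < 1"
proof -
  define d N p where "d = 1 + n\<^sup>2 + 2 * n * cos \<theta>" and "N = 1 + 2 * n * cos \<theta> + n\<^sup>2 * cos (2 * \<theta>)"
    and "p = (1 - n\<^sup>2) / (2 * (1 + n * cos \<theta>))"
  have pos: "0 < 1 + n * cos \<theta>"
    using assms(1,2) by (rule one_plus_mult_cos_pos)
  have n2: "n\<^sup>2 < 1"
    using assms(1,2) by (simp add: abs_square_less_1)
  have "0 < d" and cos4: "cos \<theta>4 = N / d" and sin4: "sin \<theta>4 = 2 * n * sin \<theta> * (1 + n * cos \<theta>) / d"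
    using cos_sin_theta4[OF assms(1-3)] unfolding \<theta>4_def d_def N_def by simp_all
  have q_d: "q = d / (2 * (1 + n * cos \<theta>))"
    by (simp add: q_def d_def)
  have "0 \<le> p" "0 \<le> q"
    using pos n2 \<open>0 < d\<close> by (simp_all add: p_def q_d)
  have "1 - n\<^sup>2 + d = 2 * (1 + n * cos \<theta>)"
    by (simp add: d_def)
  then have "p + q = 1"
    using pos by (simp add: p_def q_d flip: add_divide_distrib)
  have "d / (2 * a) * (2 * n * sin \<theta> * a / d) = n * sin \<theta>" if "0 < a" for a
    using that \<open>0 < d\<close> by (simp add: field_simps)
  from this[OF pos] have "q * sin \<theta>4 = n * sin \<theta>"
    unfolding q_d sin4 .
  have "q * cos \<theta>4 - p = (N - (1 - n\<^sup>2)) / (2 * (1 + n * cos \<theta>))"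
    using \<open>0 < d\<close> by (simp add: q_d cos4 p_def diff_divide_distrib)
  also have "N - (1 - n\<^sup>2) = n * cos \<theta> * (2 * (1 + n * cos \<theta>))"
    unfolding N_def cos_double_cos by (simp add: power2_eq_square algebra_simps)
  also have "\<dots> / (2 * (1 + n * cos \<theta>)) = n * cos \<theta>"
    using pos by (intro nonzero_mult_div_cancel_right) simp
  finally have "q * cos \<theta>4 - p = n * cos \<theta>" .
  with \<open>q * sin \<theta>4 = n * sin \<theta>\<close>
  show "pure_decomp (bloch_state (n * sin \<theta> * cos \<phi>) (n * sin \<theta> * sin \<phi>) (n * cos \<theta>)) D2"
    using pure_decomp_ket_one_pair[OF \<open>0 \<le> p\<close> \<open>0 \<le> q\<close> \<open>p + q = 1\<close>, of \<theta>4 \<phi>]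
    by (simp add: D2_def p_def mult.assoc)
  show "avg_coh (f_pow k) D2 \<le> q"
    using \<open>0 \<le> q\<close> by (simp add: D2_def avg_coh_ket_one_pair power_mult mult_left_le)
  show "q < 1"
    using pos n2 by (simp add: q_def)
qed

theorem mainTheorem8:
  fixes n \<theta> \<phi> :: real
  assumes "0 < n" "n < 1" "0 < \<theta>" "\<theta> \<le> pi / 2"
  defines "\<rho> \<equiv> bloch_state (n * sin \<theta> * cos \<phi>) (n * sin \<theta> * sin \<phi>) (n * cos \<theta>)"
      and "\<theta>3 \<equiv> arccos (sqrt (1 - n\<^sup>2 * (sin \<theta>)\<^sup>2))"
      and "\<theta>4 \<equiv> arccos ((1 + 2 * n * cos \<theta> + n\<^sup>2 * cos (2 * \<theta>)) / (1 + n\<^sup>2 + 2 * n * cos \<theta>))"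
  defines "D1 \<equiv>
     [((1 + n * cos \<theta> / cos \<theta>3) / 2,
        ket2 (of_real (cos (\<theta>3 / 2))) (exp (\<i> * of_real \<phi>) * of_real (sin (\<theta>3 / 2)))),
      ((1 - n * cos \<theta> / cos \<theta>3) / 2,
        ket2 (of_real (sin (\<theta>3 / 2))) (exp (\<i> * of_real \<phi>) * of_real (cos (\<theta>3 / 2))))]"
      and "D2 \<equiv>
     [((1 - n\<^sup>2) / (2 * (1 + n * cos \<theta>)), ket2 0 1),
      ((1 + n\<^sup>2 + 2 * n * cos \<theta>) / (2 * (1 + n * cos \<theta>)),
        ket2 (of_real (cos (\<theta>4 / 2))) (exp (\<i> * of_real \<phi>) * of_real (sin (\<theta>4 / 2))))]"
  shows "(\<forall>k::nat. k > 0 \<longrightarrow> f_pow k \<in> F_sc)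
         \<and> pure_decomp \<rho> D1 \<and> pure_decomp \<rho> D2
         \<and> (\<exists>K::nat. \<forall>k\<ge>K. avg_coh (f_pow k) D1 > avg_coh (f_pow k) D2)
         \<and> \<not> (\<forall>f\<in>F_sc. avg_coh f D1 \<le> avg_coh f D2)"
proof -
  have "0 < sin \<theta>"
    using assms(3,4) by (intro sin_gt_zero) auto
  define a where "a = 1 - n\<^sup>2 * (sin \<theta>)\<^sup>2"
  define q where "q = (1 + n\<^sup>2 + 2 * n * cos \<theta>) / (2 * (1 + n * cos \<theta>))"
  have dec1: "pure_decomp \<rho> D1" and avg1: "\<And>k. avg_coh (f_pow k) D1 = 1 - a ^ k"
    using decomposition_m1[where n = n and \<theta> = \<theta> and \<phi> = \<phi>] assms \<open>0 < sin \<theta>\<close>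
    unfolding \<rho>_def D1_def \<theta>3_def a_def by auto
  have dec2: "pure_decomp \<rho> D2" and avg2: "\<And>k. avg_coh (f_pow k) D2 \<le> q"
    using decomposition_m2(1,2)[where n = n and \<theta> = \<theta> and \<phi> = \<phi>] assms \<open>0 < sin \<theta>\<close>
    unfolding \<rho>_def D2_def \<theta>4_def q_def by auto
  have "q < 1"
    using decomposition_m2(3) assms \<open>0 < sin \<theta>\<close> unfolding q_def by simp
  have "0 \<le> a" "a < 1"
    using assms(1,2) \<open>0 < sin \<theta>\<close> sin_le_one[of \<theta>]
    by (auto simp: a_def power_mult_distrib[symmetric] abs_square_le_1 abs_mult mult_le_one)
  then have "(\<lambda>k. a ^ k) \<longlonglongrightarrow> 0"
    by (intro LIMSEQ_power_zero) simp
  then obtain K where K: "\<And>k. k \<ge> K \<Longrightarrow> a ^ k < 1 - q"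
    using order_tendstoD(2)[of _ 0 sequentially "1 - q"] \<open>q < 1\<close>
    by (auto simp: eventually_sequentially)
  have gap: "avg_coh (f_pow k) D1 > avg_coh (f_pow k) D2" if "k \<ge> K" for k
    using K[OF that] avg1[of k] avg2[of k] by linarith
  moreover have "\<not> (\<forall>f\<in>F_sc. avg_coh f D1 \<le> avg_coh f D2)"
    using gap[OF order_refl] f_pow_in_F_sc[of K] by force
  ultimately show ?thesis
    using f_pow_in_F_sc dec1 dec2 by blast
qed

end
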